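(* Let $f\in C^1[0,1]$ with $f(0)=0$, $h:=f'$, $q$ satisfying (q), and let $c^*$ be the threshold for $(P^{00}_c)$. For every $c>c^*$ there exists $\beta=\beta(c)<0$ with $\beta(c)\ge f(1)-c$ such that, for $b<0$, problem $(P_c)$ admits a solution $z$ with $z(1)=b$ if and only if $b\ge\beta(c)$; moreover such a solution is unique.
   Context: Condition (q): $q\in C[0,1]$, $q>0$ on $(0,1)$, $q(0)=q(1)=0$, and $\limsup_{\varphi\to0^+}q(\varphi)/\varphi<+\infty$. For $c\in\mathbb R$, a solution of problem $(P_c)$ is a function $z\in C[0,1]\cap C^1(0,1)$ with $\dot z(\varphi)=h(\varphi)-c-q(\varphi)/z(\varphi)$ and $z(\varphi)<0$ for all $\varphi\in(0,1)$, and $z(0)=0$. A solution of $(P^{00}_c)$ is a solution of $(P_c)$ which also satisfies $z(1)=0$. $c^*$ denotes the real number such that $(P^{00}_c)$ has a solution iff $c\ge c^*$ (that solution being unique). *)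

theory Defs
  imports "HOL-Analysis.Analysis"
begin

definition cond_q :: "(real \<Rightarrow> real) \<Rightarrow> bool" where
  "cond_q q \<longleftrightarrow> continuous_on {0..1} q \<and> (\<forall>x\<in>{0<..<1}. q x > 0) \<and> q 0 = 0 \<and> q 1 = 0 \<and>
     Limsup (at_right 0) (\<lambda>x. ereal (q x / x)) < \<infinity>"

definition sol_P :: "(real \<Rightarrow> real) \<Rightarrow> (real \<Rightarrow> real) \<Rightarrow> real \<Rightarrow> (real \<Rightarrow> real) \<Rightarrow> bool" where
  "sol_P h q c z \<longleftrightarrow> continuous_on {0..1} z \<and>
     (\<exists>z'. continuous_on {0<..<1} z' \<and>
        (\<forall>x\<in>{0<..<1}. (z has_real_derivative z' x) (at x) \<and> z' x = h x - c - q x / z x)) \<and>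
     (\<forall>x\<in>{0<..<1}. z x < 0) \<and> z 0 = 0"

definition sol_P00 :: "(real \<Rightarrow> real) \<Rightarrow> (real \<Rightarrow> real) \<Rightarrow> real \<Rightarrow> (real \<Rightarrow> real) \<Rightarrow> bool" where
  "sol_P00 h q c z \<longleftrightarrow> sol_P h q c z \<and> z 1 = 0"

end

theory Submission
  imports Defs
begin

text \<open>Write (E_c) for \<open>z' = h - c - q / z\<close>. The difference of two solutions of (E_c) that are
  negative on \<open>[t, 1]\<close> solves a linear equation with nonnegative coefficient \<open>q / (z\<^sub>1 z\<^sub>2)\<close>, so
  such solutions are ordered like their values at \<open>1\<close>, and \<open>|z\<^sub>1 - z\<^sub>2|\<close> only shrinks to the left;
  in particular a solution of (P_c) is determined by \<open>z(1)\<close>. Every \<open>b < 0\<close> is the value at \<open>1\<close> of a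
  negative solution on \<open>(0, 1]\<close>, obtained backwards by Picard iteration, and this solution solves
  (P_c) iff it tends to \<open>0\<close> at \<open>0\<close>. Comparing it with solutions of (P_c) shows that the admissible
  values \<open>b\<close> form an interval \<open>[\<beta>, 0)\<close> that contains its infimum. The interval is nonempty
  because, for \<open>c > c\<^sup>*\<close>, a backward solution of (E_c) gets above the solution of (P00) at speed
  \<open>c\<^sup>*\<close> and then stays above it; and \<open>\<beta> \<ge> f(1) - c\<close> because \<open>z - f + c x\<close> is nondecreasing.\<close>

section \<open>Terminal value problems and comparison principles\<close>

lemma integral_exp_decay:
  fixes k :: real
  assumes "k \<noteq> 0" "\<tau> \<le> b"
  shows "integral {\<tau>..b} (\<lambda>s. exp (k * (b - s))) = (exp (k * (b - \<tau>)) - 1) / k"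
proof -
  have "((\<lambda>s. exp (k * (b - s))) has_integral
      (\<lambda>s. - exp (k * (b - s)) / k) b - (\<lambda>s. - exp (k * (b - s)) / k) \<tau>) {\<tau>..b}"
    by (rule fundamental_theorem_of_calculus[OF assms(2)])
      (use assms(1) in \<open>auto intro!: derivative_eq_intros
         simp: has_real_derivative_iff_has_vector_derivative[symmetric] field_simps\<close>)
  then show ?thesis
    using assms(1) by (simp add: integral_unique field_simps)
qed

lemma integral_diff_le_exp_weight:
  fixes f g :: "real \<Rightarrow> real"
  assumes "L > 0" "\<tau> \<le> b" "continuous_on {\<tau>..b} f" "continuous_on {\<tau>..b} g"
    and bound: "\<And>s. s \<in> {\<tau>..b} \<Longrightarrow> \<bar>f s - g s\<bar> \<le> L * d * exp (2 * L * (b - s))"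
  shows "\<bar>integral {\<tau>..b} f - integral {\<tau>..b} g\<bar> \<le> d / 2 * exp (2 * L * (b - \<tau>))"
proof -
  have "0 \<le> L * d"
    using bound[of b] assms(2) by simp
  then have d: "0 \<le> d" using \<open>L > 0\<close> by (simp add: zero_le_mult_iff)
  have "\<bar>integral {\<tau>..b} f - integral {\<tau>..b} g\<bar> = norm (integral {\<tau>..b} (\<lambda>s. f s - g s))"
    using assms(3,4) by (simp add: integral_diff integrable_continuous_real)
  also have "\<dots> \<le> integral {\<tau>..b} (\<lambda>s. L * d * exp (2 * L * (b - s)))"
    using assms(3,4) bound
    by (intro integral_norm_bound_integral integrable_continuous_real continuous_intros) auto
  also have "\<dots> = d / 2 * (exp (2 * L * (b - \<tau>)) - 1)"
    using integral_exp_decay[of "2 * L" \<tau> b] assms(1,2) by simp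
  also have "\<dots> \<le> d / 2 * exp (2 * L * (b - \<tau>))"
    using d by (simp add: mult_left_mono)
  finally show ?thesis .
qed

lemma lipschitz_terminal_value_problem:
  fixes G :: "real \<Rightarrow> real \<Rightarrow> real"
  assumes ab: "a \<le> b" and L: "L > 0"
    and lipschitz: "\<And>t x y. t \<in> {a..b} \<Longrightarrow> \<bar>G t x - G t y\<bar> \<le> L * \<bar>x - y\<bar>"
    and cont: "\<And>u. continuous_on {a..b} u \<Longrightarrow> continuous_on {a..b} (\<lambda>s. G s (u s))"
  obtains y where "y b = y\<^sub>b"
    and "\<And>t. t \<in> {a..b} \<Longrightarrow> (y has_real_derivative G t (y t)) (at t within {a..b})"
proof -
  define W where "W t = exp (2 * L * (b - t))" for t
  have W_cont: "continuous_on S W" for S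
    unfolding W_def by (intro continuous_intros)
  have G_cont: "continuous_on {a..b} (\<lambda>s. G s (W s * u s))" if "continuous_on {a..b} u" for u
    by (intro cont continuous_intros W_cont that)
  define \<Phi> where "\<Phi> u t = (y\<^sub>b - integral {t..b} (\<lambda>s. G s (W s * u s))) / W t" for u :: "real \<Rightarrow> real" and t
  have clamp: "clamp a b x \<in> {a..b}" for x :: real
    using clamp_in_interval[of a b x] ab by simp
  have "\<exists>v :: real \<Rightarrow>\<^sub>C real. \<forall>x. v x = \<Phi> u (clamp a b x)" for u :: "real \<Rightarrow>\<^sub>C real"
  proof -
    have "continuous_on (cbox a b) (\<Phi> u)"
      unfolding \<Phi>_def cbox_interval
      by (intro continuous_intros indefinite_integral_continuous_1' integrable_continuous_real
          G_cont W_cont continuous_on_subset[OF continuous_on_apply_bcontfun]) (auto simp: W_def)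
    then show ?thesis
      by (metis continuous_on_cbox_bcontfunE)
  qed
  then obtain T :: "(real \<Rightarrow>\<^sub>C real) \<Rightarrow> (real \<Rightarrow>\<^sub>C real)" where T: "\<And>u x. T u x = \<Phi> u (clamp a b x)"
    by metis
  \<comment> \<open>The weight \<open>W\<close> turns the Picard map into a contraction for the sup norm (Bielecki's trick).\<close>
  have "dist (T u) (T v) \<le> 1/2 * dist u v" for u v
  proof (rule dist_bound)
    fix x
    define \<tau> where "\<tau> = clamp a b x"
    have \<tau>: "\<tau> \<in> {a..b}" using clamp \<tau>_def by simp
    have "\<bar>G s (W s * u s) - G s (W s * v s)\<bar> \<le> L * dist u v * W s" if "s \<in> {\<tau>..b}" for s
    proof -
      have "\<bar>G s (W s * u s) - G s (W s * v s)\<bar> \<le> L * (W s * \<bar>u s - v s\<bar>)"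
        using lipschitz[of s "W s * u s" "W s * v s"] that \<tau>
        by (simp add: W_def abs_mult right_diff_distrib[symmetric])
      also have "\<dots> \<le> L * (W s * dist u v)"
        using dist_bounded[of u s v] L by (simp add: W_def dist_real_def)
      finally show ?thesis by (simp add: mult.commute mult.left_commute)
    qed
    then have "\<bar>integral {\<tau>..b} (\<lambda>s. G s (W s * u s)) - integral {\<tau>..b} (\<lambda>s. G s (W s * v s))\<bar>
        \<le> dist u v / 2 * W \<tau>"
      unfolding W_def using \<tau> L
      by (intro integral_diff_le_exp_weight continuous_on_subset[OF G_cont[unfolded W_def]]) auto
    then show "dist (T u x) (T v x) \<le> 1/2 * dist u v"
      by (simp add: T \<tau>_def[symmetric] \<Phi>_def dist_real_def W_def
          diff_divide_distrib[symmetric] abs_div divide_le_eq abs_minus_commute)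
  qed
  then obtain u where u: "T u = u"
    using banach_fix_type[of "1/2" T] by auto
  define y where "y t = W t * u t" for t
  have y: "y t = y\<^sub>b - integral {t..b} (\<lambda>s. G s (y s))" if "t \<in> {a..b}" for t
    using T[of u t] that by (simp add: u y_def \<Phi>_def W_def)
  show thesis
  proof
    show "y b = y\<^sub>b" using y[of b] ab by simp
    fix t assume t: "t \<in> {a..b}"
    have "continuous_on {a..b} (\<lambda>s. G s (y s))"
      unfolding y_def by (intro G_cont continuous_on_subset[OF continuous_on_apply_bcontfun]) auto
    then have "((\<lambda>t. y\<^sub>b - integral {t..b} (\<lambda>s. G s (y s))) has_real_derivative G t (y t))
        (at t within {a..b})"
      using integral_has_real_derivative'[OF _ t] by (auto intro!: derivative_eq_intros)
    then show "(y has_real_derivative G t (y t)) (at t within {a..b})"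
      by (rule has_field_derivative_transform_within[OF _ zero_less_one t]) (simp add: y)
  qed
qed

lemma linear_ode_eq_terminal:
  fixes g w :: "real \<Rightarrow> real"
  assumes g: "continuous_on {a..b} g" and w: "continuous_on {a..b} w"
    and w': "\<And>t. t \<in> {a<..<b} \<Longrightarrow> (w has_real_derivative g t * w t) (at t)"
    and t: "t \<in> {a..b}"
  shows "w t = w b * exp (- integral {t..b} g)"
proof -
  define k where "k s = w s * exp (integral {s..b} g)" for s
  have "k b = k t"
  proof (cases "t = b")
    case False
    show ?thesis
    proof (rule DERIV_isconst_end[where f = k])
      show "t < b" using False t by auto
      show "continuous_on {t..b} k"
        unfolding k_def using t
        by (intro continuous_intros continuous_on_subset[OF w] continuous_on_subset
            [OF indefinite_integral_continuous_1'[OF integrable_continuous_real[OF g]]]) auto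
      fix x assume "t < x" "x < b"
      then have x: "x \<in> {a<..<b}" using t by auto
      have "((\<lambda>s. integral {s..b} g) has_real_derivative - g x) (at x)"
        using integral_has_real_derivative'[OF g, of x] x at_within_Icc_at[of a x b] by auto
      then show "(k has_real_derivative 0) (at x)"
        unfolding k_def using w'[OF x] by (auto intro!: derivative_eq_intros simp: algebra_simps)
    qed
  qed simp
  then show ?thesis by (simp add: k_def exp_minus field_simps)
qed

lemma positive_on_Icc_by_barrier:
  fixes w :: "real \<Rightarrow> real"
  assumes w: "continuous_on {a..b} w" and wb: "w b > 0"
    and barrier: "\<And>s. s \<in> {a..<b} \<Longrightarrow> w s \<le> 0 \<Longrightarrow> \<exists>l<0. (w has_real_derivative l) (at s within {a..b})"
    and t: "t \<in> {a..b}"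
  shows "w t > 0"
proof (rule ccontr)
  assume "\<not> w t > 0"
  define A where "A = {a..b} \<inter> w -` {..0}"
  have "compact A"
    unfolding A_def compact_eq_bounded_closed
    by (auto intro: continuous_closed_preimage[OF w] bounded_subset[of "{a..b}"])
  moreover have "t \<in> A" unfolding A_def using t \<open>\<not> w t > 0\<close> by auto
  ultimately obtain s where s: "s \<in> A" and s_max: "\<And>x. x \<in> A \<Longrightarrow> x \<le> s"
    using compact_attains_sup by (metis empty_iff)
  have "s \<in> {a..<b}" "w s \<le> 0"
    using s wb unfolding A_def by (auto simp: less_le)
  then obtain d where d: "d > 0" "\<And>h. h > 0 \<Longrightarrow> s + h \<in> {a..b} \<Longrightarrow> h < d \<Longrightarrow> w (s + h) < w s"
    using barrier has_real_derivative_neg_dec_right by metis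
  define h where "h = min (d / 2) (b - s)"
  have "h > 0" "s + h \<in> {a..b}" "h < d"
    using d \<open>s \<in> {a..<b}\<close> by (auto simp: h_def)
  then have "s + h \<in> A"
    using d(2) \<open>w s \<le> 0\<close> unfolding A_def by fastforce
  then show False using s_max \<open>h > 0\<close> by fastforce
qed

lemma le_of_slope_ge:
  fixes y :: "real \<Rightarrow> real"
  assumes "t \<le> b" "continuous_on {t..b} y"
    and slope: "\<And>x. t < x \<Longrightarrow> x < b \<Longrightarrow> \<exists>l. (y has_real_derivative l) (at x) \<and> - K \<le> l"
  shows "y t \<le> y b + K * (b - t)"
proof -
  have "y t + K * t \<le> y b + K * b"
  proof (rule DERIV_nonneg_imp_increasing_open[where f = "\<lambda>s. y s + K * s"])
    fix x assume "t < x" "x < b"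
    then obtain l where "(y has_real_derivative l) (at x)" "- K \<le> l"
      using slope by blast
    then show "\<exists>l. ((\<lambda>s. y s + K * s) has_real_derivative l) (at x) \<and> 0 \<le> l"
      by (intro exI[of _ "l + K"]) (auto intro!: derivative_eq_intros)
  qed (use assms in \<open>auto intro!: continuous_intros\<close>)
  then show ?thesis by (simp add: algebra_simps)
qed

lemma continuous_on_Ioc_if_Icc:
  fixes f :: "real \<Rightarrow> 'a::topological_space"
  assumes "\<And>a. l < a \<Longrightarrow> a < b \<Longrightarrow> continuous_on {a..b} f"
  shows "continuous_on {l<..b} f"
  unfolding continuous_on_eq_continuous_within
proof
  fix x assume x: "x \<in> {l<..b}"
  define a where "a = (l + x) / 2"
  have a: "l < a" "a < x" using x by (auto simp: a_def)
  then have "continuous (at x within {a..b}) f"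
    using assms[of a] x by (auto simp: continuous_on_eq_continuous_within)
  moreover have "at x within {l<..b} = at x within {a..b}"
    by (rule at_within_nhd[of x "{a<..}"]) (use x a in auto)
  ultimately show "continuous (at x within {l<..b}) f" by simp
qed

lemma inverse_min_lipschitz:
  fixes x y \<delta> :: real
  assumes "\<delta> > 0"
  shows "\<bar>1 / min x (- \<delta>) - 1 / min y (- \<delta>)\<bar> \<le> \<bar>x - y\<bar> / \<delta>\<^sup>2"
proof -
  define mx my where "mx = min x (- \<delta>)" and "my = min y (- \<delta>)"
  have m: "mx \<le> - \<delta>" "my \<le> - \<delta>" unfolding mx_def my_def by auto
  have "\<delta>\<^sup>2 \<le> mx * my"
    using mult_mono[of \<delta> "- mx" \<delta> "- my"] m assms by (simp add: power2_eq_square)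
  moreover have "\<bar>my - mx\<bar> \<le> \<bar>x - y\<bar>"
    unfolding mx_def my_def by (auto simp: min_def)
  moreover have "1 / mx - 1 / my = (my - mx) / (mx * my)"
    using m assms by (simp add: field_simps)
  ultimately show ?thesis
    using assms by (simp add: abs_div frac_le mx_def[symmetric] my_def[symmetric])
qed

lemma sol_P_tendsto_0:
  assumes "sol_P h q c z"
  shows "(z \<longlongrightarrow> 0) (at_right 0)"
  using continuous_on_Icc_at_rightD[of 0 1 z] assms by (simp add: sol_P_def)

lemma sol_P_terminal_ge:
  fixes f h q z :: "real \<Rightarrow> real"
  assumes f': "\<forall>x\<in>{0..1}. (f has_real_derivative h x) (at x within {0..1})" and f0: "f 0 = 0"
    and q_pos: "\<forall>x\<in>{0<..<1}. q x > 0" and z: "sol_P h q c z"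
  shows "f 1 - c \<le> z 1"
proof -
  obtain z' where z_cont: "continuous_on {0..1} z" and z_neg: "\<forall>x\<in>{0<..<1}. z x < 0"
    and z0: "z 0 = 0"
    and z': "\<forall>x\<in>{0<..<1}. (z has_real_derivative z' x) (at x) \<and> z' x = h x - c - q x / z x"
    using z unfolding sol_P_def by blast
  have f_cont: "continuous_on {0..1} f"
    by (rule DERIV_continuous_on) (use f' in blast)
  have "z 0 - f 0 + c * 0 \<le> z 1 - f 1 + c * 1"
  proof (rule DERIV_nonneg_imp_increasing_open[where f = "\<lambda>x. z x - f x + c * x"])
    fix x :: real assume x: "0 < x" "x < 1"
    then have "(f has_real_derivative h x) (at x within {0..1})"
      using f' by simp
    then have "(f has_real_derivative h x) (at x)"
      using at_within_Icc_at[of 0 x 1] x by simp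
    then have "((\<lambda>x. z x - f x + c * x) has_real_derivative - (q x / z x)) (at x)"
      using z' x by (auto intro!: derivative_eq_intros)
    moreover have "q x / z x \<le> 0"
      using q_pos z_neg x by (simp add: divide_nonneg_neg less_imp_le)
    ultimately show "\<exists>l. ((\<lambda>x. z x - f x + c * x) has_real_derivative l) (at x) \<and> 0 \<le> l"
      by auto
  qed (use f_cont z_cont in \<open>auto intro!: continuous_intros\<close>)
  then show ?thesis using z0 f0 by simp
qed

section \<open>The equation \<open>z' = h - c - q / z\<close>\<close>

locale profile_ode =
  fixes h q :: "real \<Rightarrow> real"
  assumes h_cont: "continuous_on {0..1} h"
    and q_cont: "continuous_on {0..1} q"
    and q_pos: "\<forall>x\<in>{0<..<1}. q x > 0"
    and q_0: "q 0 = 0" and q_1: "q 1 = 0"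
begin

text \<open>Derivatives are only required at interior points, so that the same notion serves for
  \<open>[a, 1]\<close> and for \<open>(0, 1]\<close>.\<close>

definition negative_solution_on :: "real \<Rightarrow> real set \<Rightarrow> (real \<Rightarrow> real) \<Rightarrow> bool" where
  "negative_solution_on c S z \<longleftrightarrow> continuous_on S z \<and>
     (\<forall>t\<in>interior S. (z has_real_derivative h t - c - q t / z t) (at t)) \<and> (\<forall>t\<in>S. z t < 0)"

lemma q_nonneg: "t \<in> {0..1} \<Longrightarrow> q t \<ge> 0"
  using q_pos q_0 q_1 by (cases "t = 0 \<or> t = 1") (auto simp: less_le)

lemma negative_solution_on_subset:
  "negative_solution_on c S z \<Longrightarrow> T \<subseteq> S \<Longrightarrow> negative_solution_on c T z"
  unfolding negative_solution_on_def
  by (meson continuous_on_subset interior_mono subsetD)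

lemma negative_solutions_ordered:
  assumes sub: "{a..b} \<subseteq> {0..1}"
    and y1: "negative_solution_on c {a..b} y\<^sub>1" and y2: "negative_solution_on c {a..b} y\<^sub>2"
    and le: "y\<^sub>2 b \<le> y\<^sub>1 b" and t: "t \<in> {a..b}"
  shows "y\<^sub>2 t \<le> y\<^sub>1 t" "y\<^sub>1 t - y\<^sub>2 t \<le> y\<^sub>1 b - y\<^sub>2 b"
proof -
  define g where "g s = q s / (y\<^sub>1 s * y\<^sub>2 s)" for s
  have neg: "y\<^sub>1 s < 0" "y\<^sub>2 s < 0" if "s \<in> {a..b}" for s
    using y1 y2 that unfolding negative_solution_on_def by auto
  have g_cont: "continuous_on {a..b} g"
    unfolding g_def using y1 y2 neg
    by (intro continuous_intros continuous_on_subset[OF q_cont sub])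
      (auto simp: negative_solution_on_def less_imp_neq)
  have "((\<lambda>s. y\<^sub>1 s - y\<^sub>2 s) has_real_derivative g s * (y\<^sub>1 s - y\<^sub>2 s)) (at s)" if "s \<in> {a<..<b}" for s
  proof -
    have "(h s - c - q s / y\<^sub>1 s) - (h s - c - q s / y\<^sub>2 s) = g s * (y\<^sub>1 s - y\<^sub>2 s)"
      using neg[of s] that by (auto simp: g_def field_simps)
    then show ?thesis
      using y1 y2 that unfolding negative_solution_on_def
      by (auto intro!: derivative_eq_intros)
  qed
  moreover have "continuous_on {a..b} (\<lambda>s. y\<^sub>1 s - y\<^sub>2 s)"
    using y1 y2 unfolding negative_solution_on_def by (intro continuous_intros) auto
  ultimately have diff: "y\<^sub>1 t - y\<^sub>2 t = (y\<^sub>1 b - y\<^sub>2 b) * exp (- integral {t..b} g)"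
    using linear_ode_eq_terminal[OF g_cont _ _ t, of "\<lambda>s. y\<^sub>1 s - y\<^sub>2 s"] by simp
  have "integral {t..b} g \<ge> 0"
    using t sub neg q_nonneg
    by (intro integral_nonneg integrable_continuous_real continuous_on_subset[OF g_cont])
      (auto simp: g_def intro!: divide_nonneg_pos mult_neg_neg)
  then have "exp (- integral {t..b} g) \<le> 1" by simp
  then have "0 \<le> y\<^sub>1 t - y\<^sub>2 t \<and> y\<^sub>1 t - y\<^sub>2 t \<le> y\<^sub>1 b - y\<^sub>2 b"
    unfolding diff using le by (auto intro: mult_left_le)
  then show "y\<^sub>2 t \<le> y\<^sub>1 t" "y\<^sub>1 t - y\<^sub>2 t \<le> y\<^sub>1 b - y\<^sub>2 b"
    by auto
qed

lemma negative_solutions_unique: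
  assumes "{a..b} \<subseteq> {0..1}"
    and "negative_solution_on c {a..b} y\<^sub>1" "negative_solution_on c {a..b} y\<^sub>2"
    and "y\<^sub>1 b = y\<^sub>2 b" "t \<in> {a..b}"
  shows "y\<^sub>1 t = y\<^sub>2 t"
  using negative_solutions_ordered[OF assms(1,2,3)] negative_solutions_ordered[OF assms(1,3,2)] assms(4,5)
  by (simp add: order_antisym)

lemma truncated_solution_exists:
  assumes \<delta>: "\<delta> > 0" and a: "a \<in> {0..1}"
  obtains y where "y 1 = y\<^sub>1"
    and "\<And>t. t \<in> {a..1} \<Longrightarrow>
           (y has_real_derivative h t - c - q t / min (y t) (- \<delta>)) (at t within {a..1})"
proof -
  have sub: "{a..1} \<subseteq> {0..1}" using a by auto
  obtain Q where Q: "Q > 0" "\<And>t. t \<in> {0..1} \<Longrightarrow> \<bar>q t\<bar> \<le> Q"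
    using compact_imp_bounded[OF compact_continuous_image[OF q_cont]] by (auto simp: bounded_pos)
  show thesis
  proof (rule lipschitz_terminal_value_problem[of a 1 "Q / \<delta>\<^sup>2" _ y\<^sub>1])
    show "a \<le> 1" "Q / \<delta>\<^sup>2 > 0" using a Q \<delta> by auto
  next
    fix t x y assume t: "t \<in> {a..1}"
    have "(h t - c - q t / min x (- \<delta>)) - (h t - c - q t / min y (- \<delta>))
        = q t * (1 / min y (- \<delta>) - 1 / min x (- \<delta>))"
      by (simp add: right_diff_distrib)
    then have "\<bar>(h t - c - q t / min x (- \<delta>)) - (h t - c - q t / min y (- \<delta>))\<bar>
        = q t * \<bar>1 / min y (- \<delta>) - 1 / min x (- \<delta>)\<bar>"
      using q_nonneg[of t] t sub by (simp add: abs_mult)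
    also have "\<dots> \<le> Q * (\<bar>y - x\<bar> / \<delta>\<^sup>2)"
      using Q(2)[of t] q_nonneg[of t] t sub inverse_min_lipschitz[OF \<delta>, of y x]
      by (intro mult_mono) auto
    finally show "\<bar>(h t - c - q t / min x (- \<delta>)) - (h t - c - q t / min y (- \<delta>))\<bar>
        \<le> Q / \<delta>\<^sup>2 * \<bar>x - y\<bar>" by (simp add: abs_minus_commute)
  next
    fix u :: "real \<Rightarrow> real" assume "continuous_on {a..1} u"
    then show "continuous_on {a..1} (\<lambda>s. h s - c - q s / min (u s) (- \<delta>))"
      using \<delta> by (intro continuous_intros continuous_on_subset[OF h_cont sub]
          continuous_on_subset[OF q_cont sub]) auto
  qed (rule that)
qed

text \<open>Solve the equation with \<open>z\<close> replaced by \<open>min z (-\<delta>)\<close>. Near \<open>1\<close>, where \<open>q\<close> degenerates,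
  the solution stays below \<open>y\<^sub>1 / 2\<close> because its slope is bounded below; away from \<open>1\<close>,
  \<open>q / \<delta>\<close> dominates \<open>h - c\<close>, so the solution cannot reach the level \<open>-\<delta>\<close> coming from the right.
  Hence the truncation is never active.\<close>

lemma backward_solution_exists_Icc:
  assumes y1: "y\<^sub>1 < 0" and a: "0 < a" "a < 1"
  obtains y where "negative_solution_on c {a..1} y" "y 1 = y\<^sub>1"
proof -
  have sub: "{a..1} \<subseteq> {0..1}" using a by auto
  have "continuous_on {0..1} (\<lambda>t. h t - c)"
    by (intro continuous_intros h_cont)
  from compact_imp_bounded[OF compact_continuous_image[OF this]]
  obtain K where K: "K > 0" "\<And>t. t \<in> {0..1} \<Longrightarrow> \<bar>h t - c\<bar> \<le> K"
    by (auto simp: bounded_pos)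
  define t\<^sub>1 where "t\<^sub>1 = max a (1 + y\<^sub>1 / (2 * K))"
  have t1: "a \<le> t\<^sub>1" "t\<^sub>1 < 1"
    using y1 K a by (auto simp: t\<^sub>1_def divide_neg_pos)
  obtain m where m: "m \<in> {a..t\<^sub>1}" "\<And>t. t \<in> {a..t\<^sub>1} \<Longrightarrow> q m \<le> q t"
    using continuous_attains_inf[of "{a..t\<^sub>1}" q] continuous_on_subset[OF q_cont] t1 a by auto
  have qm: "q m > 0" using q_pos m t1 a by auto
  define \<delta> where "\<delta> = min (- y\<^sub>1 / 4) (q m / (2 * K))"
  have \<delta>: "\<delta> > 0" "\<delta> \<le> - y\<^sub>1 / 4" "2 * K * \<delta> \<le> q m"
    using y1 qm K by (auto simp: \<delta>_def min_def field_simps)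
  obtain y where y_1: "y 1 = y\<^sub>1" and y': "\<And>t. t \<in> {a..1} \<Longrightarrow>
      (y has_real_derivative h t - c - q t / min (y t) (- \<delta>)) (at t within {a..1})"
    using truncated_solution_exists[OF \<delta>(1), of a] a by auto
  have y_cont: "continuous_on {a..1} y"
    using y' by (rule DERIV_continuous_on)
  have y'_at: "(y has_real_derivative h t - c - q t / min (y t) (- \<delta>)) (at t)"
    if "t \<in> {a<..<1}" for t
    using y'[of t] that at_within_Icc_at[of a t 1] by auto
  have near_1: "y t < - \<delta>" if t: "t \<in> {t\<^sub>1<..1}" for t
  proof -
    have "y t \<le> y 1 + K * (1 - t)"
    proof (rule le_of_slope_ge)
      fix x assume "t < x" "x < 1"
      then have x: "x \<in> {a<..<1}" using t t1 by auto
      have "q x / min (y x) (- \<delta>) \<le> 0"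
        using q_nonneg[of x] x a \<delta>(1) by (intro divide_nonneg_neg) auto
      then show "\<exists>l. (y has_real_derivative l) (at x) \<and> - K \<le> l"
        using y'_at[OF x] K(2)[of x] x a by (intro exI conjI) (auto simp: abs_le_iff)
    qed (use t t1 in \<open>auto intro: continuous_on_subset[OF y_cont]\<close>)
    moreover have "K * (1 - t) < - y\<^sub>1 / 2"
      using t K unfolding t\<^sub>1_def by (auto simp: field_simps)
    ultimately show ?thesis using y_1 \<delta>(2) y1 by simp
  qed
  have below: "y t < - \<delta>" if t: "t \<in> {a..1}" for t
  proof -
    have "(\<lambda>s. - \<delta> - y s) t > 0"
    proof (rule positive_on_Icc_by_barrier[OF _ _ _ t])
      fix s assume s: "s \<in> {a..<1}" and "- \<delta> - y s \<le> 0"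
      then have "s \<in> {a..t\<^sub>1}" using near_1[of s] by force
      have "K * \<delta> < q s"
        using \<delta>(3) m(2)[OF \<open>s \<in> {a..t\<^sub>1}\<close>] mult_pos_pos[OF K(1) \<delta>(1)] by linarith
      then have "K - q s / \<delta> < 0"
        using \<delta>(1) by (simp add: field_simps)
      moreover have "- (h s - c - q s / min (y s) (- \<delta>)) \<le> K - q s / \<delta>"
        using K(2)[of s] \<open>- \<delta> - y s \<le> 0\<close> s a by (auto simp: min_def)
      moreover have "((\<lambda>s. - \<delta> - y s) has_real_derivative - (h s - c - q s / min (y s) (- \<delta>)))
          (at s within {a..1})"
        using s by (auto intro!: derivative_eq_intros y')
      ultimately show "\<exists>l<0. ((\<lambda>s. - \<delta> - y s) has_real_derivative l) (at s within {a..1})"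
        by (intro exI conjI) auto
    qed (use y_cont y_1 y1 \<delta> in \<open>auto intro!: continuous_intros\<close>)
    then show ?thesis by simp
  qed
  show thesis
  proof
    show "y 1 = y\<^sub>1" by (fact y_1)
    show "negative_solution_on c {a..1} y"
      unfolding negative_solution_on_def
    proof (intro conjI ballI)
      fix t assume "t \<in> interior {a..1}"
      then show "(y has_real_derivative h t - c - q t / y t) (at t)"
        using y'_at[of t] below[of t] by (simp add: min_def)
    qed (use y_cont below \<delta>(1) in \<open>fastforce+\<close>)
  qed
qed

lemma negative_solution_on_Ioc_if_Icc:
  assumes "\<And>a. 0 < a \<Longrightarrow> a < 1 \<Longrightarrow> negative_solution_on c {a..1} z"
  shows "negative_solution_on c {0<..1} z"
  unfolding negative_solution_on_def
proof (intro conjI ballI)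
  show "continuous_on {0<..1} z"
    using assms by (intro continuous_on_Ioc_if_Icc) (simp add: negative_solution_on_def)
next
  fix t :: real assume "t \<in> interior {0<..1}"
  then show "(z has_real_derivative h t - c - q t / z t) (at t)"
    using assms[of "t / 2"] by (simp add: negative_solution_on_def)
next
  fix t :: real assume "t \<in> {0<..1}"
  then show "z t < 0"
    using assms[of "t / 2"] by (simp add: negative_solution_on_def)
qed

lemma backward_solution_exists:
  assumes y1: "y\<^sub>1 < 0"
  obtains z where "negative_solution_on c {0<..1} z" "z 1 = y\<^sub>1"
proof -
  define Y where "Y a = (SOME y. negative_solution_on c {a..1} y \<and> y 1 = y\<^sub>1)" for a
  have Y: "negative_solution_on c {a..1} (Y a)" "Y a 1 = y\<^sub>1" if "0 < a" "a < 1" for a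
  proof -
    have "\<exists>y. negative_solution_on c {a..1} y \<and> y 1 = y\<^sub>1"
      using backward_solution_exists_Icc[OF y1 that] by blast
    then show "negative_solution_on c {a..1} (Y a)" "Y a 1 = y\<^sub>1"
      unfolding Y_def by (metis (mono_tags, lifting) someI_ex)+
  qed
  \<comment> \<open>By uniqueness, all the \<open>Y a\<close> are restrictions of a single function.\<close>
  define z where "z t = Y (t / 2) t" for t
  have z_eq: "z t = Y a t" if a: "0 < a" "a < 1" and t: "t \<in> {a..1}" for a t
  proof -
    have t2: "0 < t / 2" "t / 2 < 1" using a t by auto
    have "negative_solution_on c {max a (t / 2)..1} (Y (t / 2))"
      by (rule negative_solution_on_subset[OF Y(1)[OF t2]]) auto
    moreover have "negative_solution_on c {max a (t / 2)..1} (Y a)"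
      by (rule negative_solution_on_subset[OF Y(1)[OF a]]) auto
    moreover have "Y (t / 2) 1 = Y a 1"
      using Y(2)[OF t2] Y(2)[OF a] by simp
    ultimately show ?thesis
      unfolding z_def by (rule negative_solutions_unique[rotated]) (use a t in auto)
  qed
  have "negative_solution_on c {a..1} z" if a: "0 < a" "a < 1" for a
    unfolding negative_solution_on_def
  proof (intro conjI ballI)
    show "continuous_on {a..1} z"
      using Y(1)[OF a] z_eq[OF a] continuous_on_cong[of "{a..1}" "{a..1}" z "Y a"]
      by (simp add: negative_solution_on_def)
    fix t assume t: "t \<in> interior {a..1}"
    then have "(Y a has_real_derivative h t - c - q t / z t) (at t)"
      using Y(1)[OF a] z_eq[OF a, of t] by (simp add: negative_solution_on_def)
    then show "(z has_real_derivative h t - c - q t / z t) (at t)"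
      by (rule has_field_derivative_transform_within_open[of _ _ _ "{a<..<1}"])
        (use t z_eq[OF a] in auto)
  next
    fix t assume "t \<in> {a..1}"
    then show "z t < 0" using Y(1)[OF a] z_eq[OF a, of t] by (simp add: negative_solution_on_def)
  qed
  then show thesis
    using that[of z] negative_solution_on_Ioc_if_Icc z_eq[of "1/2" 1] Y(2)[of "1/2"] by simp
qed

section \<open>Solutions of (P_c) with prescribed value at \<open>1\<close>\<close>

lemma negative_solution_if_sol_P:
  assumes z: "sol_P h q c z" and z1: "z 1 < 0"
  shows "negative_solution_on c {0<..1} z"
proof -
  obtain z' where "continuous_on {0..1} z" "\<forall>x\<in>{0<..<1}. z x < 0"
    "\<forall>x\<in>{0<..<1}. (z has_real_derivative z' x) (at x) \<and> z' x = h x - c - q x / z x"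
    using z unfolding sol_P_def by blast
  then show ?thesis
    unfolding negative_solution_on_def using z1
    by (auto intro: continuous_on_subset simp: less_le)
qed

lemma sol_P_if_negative_solution:
  assumes z: "negative_solution_on c {0<..1} z" and lim: "(z \<longlongrightarrow> 0) (at_right 0)"
  shows "sol_P h q c (z(0 := 0))"
proof -
  define Z where "Z = z(0 := 0)"
  have Z_eq: "Z t = z t" if "t \<noteq> 0" for t
    using that by (simp add: Z_def)
  have Z': "(Z has_real_derivative h t - c - q t / Z t) (at t)" if t: "t \<in> {0<..<1}" for t
  proof -
    have "(z has_real_derivative h t - c - q t / Z t) (at t)"
      using z t Z_eq[of t] by (simp add: negative_solution_on_def)
    then show ?thesis
      by (rule has_field_derivative_transform_within_open[of _ _ _ "{0<..}"]) (use t Z_eq in auto)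
  qed
  have Z_cont: "continuous_on {0..1} Z"
  proof (rule continuous_on_IccI)
    have "\<forall>\<^sub>F t in at_right 0. z t = Z t"
      by (rule eventually_at_rightI[of _ 1]) (auto simp: Z_eq)
    moreover have "Z 0 = 0" unfolding Z_def by simp
    ultimately show "(Z \<longlongrightarrow> Z 0) (at_right 0)"
      using tendsto_cong lim by metis
    have "continuous_on {1/2..1} Z"
      using z Z_eq continuous_on_cong[of "{1/2..1}" "{1/2..1}" Z z]
      by (auto simp: negative_solution_on_def intro: continuous_on_subset)
    then show "(Z \<longlongrightarrow> Z 1) (at_left 1)"
      by (rule continuous_on_Icc_at_leftD) simp
  qed (use Z' in \<open>auto intro: DERIV_isCont[THEN isContD]\<close>)
  have Z_neg: "\<forall>t\<in>{0<..<1}. Z t < 0"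
    using z Z_eq by (simp add: negative_solution_on_def)
  show ?thesis
    unfolding sol_P_def Z_def[symmetric]
  proof (intro conjI exI[of _ "\<lambda>t. h t - c - q t / Z t"] ballI)
    show "continuous_on {0<..<1} (\<lambda>t. h t - c - q t / Z t)"
      using Z_neg
      by (intro continuous_intros continuous_on_subset[OF h_cont] continuous_on_subset[OF q_cont]
          continuous_on_subset[OF Z_cont]) (auto simp: less_imp_neq)
  qed (use Z_cont Z' Z_neg in \<open>auto simp: Z_def\<close>)
qed

lemma sol_P_unique:
  assumes z1: "sol_P h q c z\<^sub>1" and z2: "sol_P h q c z\<^sub>2"
    and eq: "z\<^sub>1 1 = z\<^sub>2 1" and neg: "z\<^sub>1 1 < 0" and t: "t \<in> {0..1}"
  shows "z\<^sub>1 t = z\<^sub>2 t"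
proof (cases "t = 0")
  case True
  then show ?thesis using z1 z2 by (simp add: sol_P_def)
next
  case False
  then have sub: "{t..1} \<subseteq> {0<..1}" using t by auto
  have "negative_solution_on c {t..1} z\<^sub>1" "negative_solution_on c {t..1} z\<^sub>2"
    using negative_solution_if_sol_P[OF z1 neg] negative_solution_if_sol_P[OF z2] eq neg
      negative_solution_on_subset[OF _ sub] by auto
  then show ?thesis
    by (rule negative_solutions_unique[rotated]) (use eq t in auto)
qed

text \<open>Comparison with solutions of (P_c) whose value at \<open>1\<close> is close to \<open>\<beta>\<close> from above, or
  below \<open>\<beta>\<close>, forces the backward solution through \<open>\<beta>\<close> to tend to \<open>0\<close> at \<open>0\<close>.\<close>

lemma sol_P_with_terminal_value:
  assumes \<beta>: "\<beta> < 0"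
    and approx: "\<And>e. e > 0 \<Longrightarrow> \<exists>z. sol_P h q c z \<and> z 1 < 0 \<and> z 1 < \<beta> + e"
  shows "\<exists>z. sol_P h q c z \<and> z 1 = \<beta>"
proof -
  obtain y where y: "negative_solution_on c {0<..1} y" and y1: "y 1 = \<beta>"
    using backward_solution_exists[OF \<beta>] by blast
  have "(y \<longlongrightarrow> 0) (at_right 0)"
  proof (rule order_tendstoI)
    fix m :: real assume m: "m < 0"
    then obtain z where z: "sol_P h q c z" "z 1 < 0" "z 1 < \<beta> - m / 2"
      using approx[of "- m / 2"] by auto
    have "\<forall>\<^sub>F t in at_right 0. m / 2 < z t"
      by (rule order_tendstoD(1)[OF sol_P_tendsto_0[OF z(1)]]) (use m in simp)
    moreover have "\<forall>\<^sub>F t in at_right 0. t \<in> {0<..<1::real}"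
      by (rule eventually_at_rightI[of _ 1]) auto
    ultimately show "\<forall>\<^sub>F t in at_right 0. m < y t"
    proof eventually_elim
      case (elim t)
      then have sub: "{t..1} \<subseteq> {0..1}" "{t..1} \<subseteq> {0<..1}" by auto
      have ys: "negative_solution_on c {t..1} y"
        by (rule negative_solution_on_subset[OF y sub(2)])
      have zs: "negative_solution_on c {t..1} z"
        by (rule negative_solution_on_subset[OF negative_solution_if_sol_P[OF z(1,2)] sub(2)])
      have t: "t \<in> {t..1}" using elim by auto
      show ?case
      proof (cases "z 1 \<le> \<beta>")
        case True
        then show ?thesis
          using negative_solutions_ordered(1)[OF sub(1) ys zs _ t] elim m y1 by auto
      next
        case False
        then show ?thesis
          using negative_solutions_ordered(2)[OF sub(1) zs ys _ t] elim z(3) y1 by auto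
      qed
    qed
  next
    fix m :: real assume "m > 0"
    have "\<forall>\<^sub>F t in at_right 0. t \<in> {0<..<1::real}"
      by (rule eventually_at_rightI[of _ 1]) auto
    then show "\<forall>\<^sub>F t in at_right 0. y t < m"
      by eventually_elim (use y \<open>m > 0\<close> in \<open>auto simp: negative_solution_on_def intro: less_trans\<close>)
  qed
  then show ?thesis
    using sol_P_if_negative_solution[OF y] y1 by fastforce
qed

lemma speed_difference_le:
  assumes t: "t \<in> {0<..<1}" and "z \<le> v" "v < 0"
  shows "(h t - c - q t / z) - (h t - c' - q t / v) \<le> c' - c"
proof -
  have "q t / v \<le> q t / z"
    using q_nonneg[of t] t assms(2,3) by (intro divide_left_mono) (auto intro: mult_neg_neg)
  then show ?thesis by simp
qed

text \<open>The difference \<open>z - v\<close> decreases strictly wherever it is \<open>\<le> 0\<close>, so it cannot become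
  \<open>\<le> 0\<close> when followed leftwards.\<close>

lemma negative_solutions_speed_comparison:
  assumes ab: "0 \<le> a" "b \<le> 1" and cc: "c' < c"
    and z: "negative_solution_on c {a<..b} z" and v: "negative_solution_on c' {a<..b} v"
    and b: "v b < z b" and t: "t \<in> {a<..b}"
  shows "v t < z t"
proof -
  have "(\<lambda>s. z s - v s) t > 0"
  proof (rule positive_on_Icc_by_barrier[of t b "\<lambda>s. z s - v s"])
    show "continuous_on {t..b} (\<lambda>s. z s - v s)"
      using z v t by (auto simp: negative_solution_on_def intro!: continuous_intros
          intro: continuous_on_subset)
  next
    fix s assume s: "s \<in> {t..<b}" and "z s - v s \<le> 0"
    then have "s \<in> {a<..<b}" "s \<in> {0<..<1}" using t ab by auto
    then have "((\<lambda>s. z s - v s) has_real_derivative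
        (h s - c - q s / z s) - (h s - c' - q s / v s)) (at s within {t..b})"
      using z v by (auto simp: negative_solution_on_def intro!: derivative_eq_intros
          intro: has_field_derivative_at_within)
    moreover have "(h s - c - q s / z s) - (h s - c' - q s / v s) \<le> c' - c"
      using speed_difference_le \<open>s \<in> {0<..<1}\<close> \<open>z s - v s \<le> 0\<close> v \<open>s \<in> {a<..<b}\<close>
      by (auto simp: negative_solution_on_def)
    ultimately show "\<exists>l<0. ((\<lambda>s. z s - v s) has_real_derivative l) (at s within {t..b})"
      using cc by (intro exI conjI) auto
  qed (use b t in auto)
  then show ?thesis by simp
qed

text \<open>The backward solution of (P_c) through \<open>(c' - c) / 2\<close> at \<open>1\<close> must get above the
  solution \<open>v\<close> of (P00_c') somewhere, since below \<open>v\<close> it would decrease too fast; from there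
  on it stays above \<open>v\<close>, which squeezes it to \<open>0\<close> at \<open>0\<close>.\<close>

lemma sol_P_exists_if_sol_P00_less:
  assumes v: "sol_P00 h q c' v" and cc: "c' < c"
  shows "\<exists>z. sol_P h q c z \<and> z 1 < 0"
proof -
  have v_sol: "sol_P h q c' v" and v1: "v 1 = 0"
    using v unfolding sol_P00_def by auto
  have v_cont: "continuous_on {0..1} v" and v_neg: "\<forall>t\<in>{0<..<1}. v t < 0"
    using v_sol unfolding sol_P_def by auto
  have v': "(v has_real_derivative h t - c' - q t / v t) (at t)" if "t \<in> {0<..<1}" for t
    using v_sol that unfolding sol_P_def by metis
  have "(c' - c) / 2 < 0" using cc by simp
  then obtain z where z: "negative_solution_on c {0<..1} z" and z1: "z 1 = (c' - c) / 2"
    using backward_solution_exists by blast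
  obtain p where p: "p \<in> {1/4..<1}" "v p < z p"
  proof (rule ccontr)
    assume "\<not> thesis"
    with that have le: "z x \<le> v x" if x: "x \<in> {1/4..<1}" for x
      using x by (meson not_less)
    have "v (1/4) - z (1/4) \<le> (v 1 - z 1) + (c' - c) * (1 - 1/4)"
    proof (rule le_of_slope_ge)
      fix x :: real assume "1/4 < x" "x < 1"
      then have x: "x \<in> {0<..<1}" "x \<in> {1/4..<1}" by auto
      then show "\<exists>l. ((\<lambda>s. v s - z s) has_real_derivative l) (at x) \<and> - (c' - c) \<le> l"
        using v'[OF x(1)] z speed_difference_le[OF x(1) le[OF x(2)]] v_neg
        by (intro exI conjI) (auto simp: negative_solution_on_def intro!: derivative_eq_intros)
    qed (use z v_cont in \<open>auto simp: negative_solution_on_def intro!: continuous_intros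
          intro: continuous_on_subset\<close>)
    then show False using le[of "1/4"] z1 v1 cc by (simp add: field_simps)
  qed
  have above: "v t < z t" if t: "t \<in> {0<..p}" for t
  proof (rule negative_solutions_speed_comparison[of 0 p c' c z v t])
    show "negative_solution_on c {0<..p} z"
      by (rule negative_solution_on_subset[OF z]) (use p in auto)
    show "negative_solution_on c' {0<..p} v"
      using v_cont v' v_neg p unfolding negative_solution_on_def
      by (auto intro: continuous_on_subset)
  qed (use p cc t in auto)
  have "(z \<longlongrightarrow> 0) (at_right 0)"
  proof (rule order_tendstoI)
    fix m :: real assume "m < 0"
    have "\<forall>\<^sub>F t in at_right 0. m < v t"
      by (rule order_tendstoD(1)[OF sol_P_tendsto_0[OF v_sol] \<open>m < 0\<close>])
    moreover have "\<forall>\<^sub>F t in at_right 0. t \<in> {0<..<p}"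
      by (rule eventually_at_rightI[of _ p]) (use p in auto)
    ultimately show "\<forall>\<^sub>F t in at_right 0. m < z t"
      by eventually_elim (use above in fastforce)
  next
    fix m :: real assume "m > 0"
    have "\<forall>\<^sub>F t in at_right 0. t \<in> {0<..<1::real}"
      by (rule eventually_at_rightI[of _ 1]) auto
    then show "\<forall>\<^sub>F t in at_right 0. z t < m"
      by eventually_elim (use z \<open>m > 0\<close> in \<open>auto simp: negative_solution_on_def intro: less_trans\<close>)
  qed
  then show ?thesis
    using sol_P_if_negative_solution[OF z] z1 cc by fastforce
qed

definition terminal_values :: "real \<Rightarrow> real set" where
  "terminal_values c = {b. b < 0 \<and> (\<exists>z. sol_P h q c z \<and> z 1 = b)}"

lemma terminal_values_eq_Ico:
  assumes ne: "terminal_values c \<noteq> {}" and bdd: "bdd_below (terminal_values c)"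
  shows "terminal_values c = {Inf (terminal_values c)..<0}"
proof (intro set_eqI iffI)
  fix b assume "b \<in> terminal_values c"
  then show "b \<in> {Inf (terminal_values c)..<0}"
    using cInf_lower[OF _ bdd] by (auto simp: terminal_values_def)
next
  fix b assume b: "b \<in> {Inf (terminal_values c)..<0}"
  have "\<exists>z. sol_P h q c z \<and> z 1 < 0 \<and> z 1 < b + e" if "e > 0" for e
  proof -
    have "Inf (terminal_values c) < b + e" using b that by auto
    then obtain b' where "b' \<in> terminal_values c" "b' < b + e"
      using cInf_lessD[OF ne] by blast
    then show ?thesis by (auto simp: terminal_values_def)
  qed
  then show "b \<in> terminal_values c"
    using sol_P_with_terminal_value[of b c] b by (auto simp: terminal_values_def)
qed

lemma terminal_value_threshold:
  assumes ex: "\<exists>z. sol_P h q c z \<and> z 1 < 0" and lower: "\<And>z. sol_P h q c z \<Longrightarrow> L \<le> z 1"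
  shows "\<exists>\<beta><0. \<beta> \<ge> L \<and>
           (\<forall>b<0. ((\<exists>z. sol_P h q c z \<and> z 1 = b) \<longleftrightarrow> b \<ge> \<beta>) \<and>
                   (\<forall>z1 z2. sol_P h q c z1 \<and> z1 1 = b \<and> sol_P h q c z2 \<and> z2 1 = b
                        \<longrightarrow> (\<forall>x\<in>{0..1}. z1 x = z2 x)))"
proof -
  let ?S = "terminal_values c"
  have "?S \<noteq> {}" "\<And>b. b \<in> ?S \<Longrightarrow> L \<le> b"
    using ex lower by (auto simp: terminal_values_def)
  moreover from this have S: "?S = {Inf ?S..<0}"
    by (intro terminal_values_eq_Ico) (auto simp: bdd_below_def)
  ultimately have "Inf ?S < 0" "L \<le> Inf ?S"
    by (auto intro: cInf_greatest)
  moreover have "(\<exists>z. sol_P h q c z \<and> z 1 = b) \<longleftrightarrow> b \<ge> Inf ?S" if "b < 0" for b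
  proof -
    have "b \<in> ?S \<longleftrightarrow> Inf ?S \<le> b"
      using that by (subst S) simp
    then show ?thesis
      using that by (simp add: terminal_values_def)
  qed
  moreover have "z\<^sub>1 x = z\<^sub>2 x"
    if "b < 0" "sol_P h q c z\<^sub>1 \<and> z\<^sub>1 1 = b \<and> sol_P h q c z\<^sub>2 \<and> z\<^sub>2 1 = b" "x \<in> {0..1}"
    for b z\<^sub>1 z\<^sub>2 x
    using that sol_P_unique[of c z\<^sub>1 z\<^sub>2 x] by simp
  ultimately show ?thesis
    by (intro exI[of _ "Inf ?S"] conjI allI impI ballI) simp_all
qed

end

lemma profile_ode_if_cond_q:
  assumes "continuous_on {0..1} h" "cond_q q"
  shows "profile_ode h q"
  using assms unfolding cond_q_def by unfold_locales auto

theorem proposition5p1: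
  fixes f h q :: "real \<Rightarrow> real" and cstar :: real
  assumes f_deriv: "\<forall>x\<in>{0..1}. (f has_real_derivative h x) (at x within {0..1})"
    and h_cont: "continuous_on {0..1} h"
    and f0: "f 0 = 0"
    and q: "cond_q q"
    and cstar: "\<forall>c. (\<exists>z. sol_P00 h q c z) \<longleftrightarrow> c \<ge> cstar"
  shows "\<forall>c>cstar. \<exists>\<beta><0. \<beta> \<ge> f 1 - c \<and>
           (\<forall>b<0. ((\<exists>z. sol_P h q c z \<and> z 1 = b) \<longleftrightarrow> b \<ge> \<beta>) \<and>
                   (\<forall>z1 z2. sol_P h q c z1 \<and> z1 1 = b \<and> sol_P h q c z2 \<and> z2 1 = b
                        \<longrightarrow> (\<forall>x\<in>{0..1}. z1 x = z2 x)))"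
proof -
  interpret profile_ode h q
    by (rule profile_ode_if_cond_q[OF h_cont q])
  obtain v where v: "sol_P00 h q cstar v"
    using cstar by auto
  show ?thesis
  proof (intro allI impI terminal_value_threshold)
    fix c assume "cstar < c"
    then show "\<exists>z. sol_P h q c z \<and> z 1 < 0"
      by (rule sol_P_exists_if_sol_P00_less[OF v])
  next
    fix c z assume "sol_P h q c z"
    then show "f 1 - c \<le> z 1"
      by (rule sol_P_terminal_ge[OF f_deriv f0 q_pos])
  qed
qed

end
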